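(* Let $q$ be a prime power, $k\ge 2$, and let $D\subseteq\mathbb{F}_q^k\setminus\{0\}$ be a set with $aD=D$ for all $a\in\mathbb{F}_q^*$ and $\#D=n$. Let $\widetilde{[D,D]}=\{(\mathbf{x},1):\mathbf{x}\in D\}\cup\{(\mathbf{x},0):\mathbf{x}\in D\}\subseteq\mathbb{F}_q^{k+1}$. For a linear form $H=\alpha_1x_1+\cdots+\alpha_kx_k+\alpha_{k+1}x_{k+1}$ on $\mathbb{F}_q^{k+1}$, let $\widetilde H=\alpha_1x_1+\cdots+\alpha_kx_k$, let $c_{\widetilde H}=(\widetilde H(\mathbf{x}))_{\mathbf{x}\in D}\in\mathrm{C}_D$, and let $c_H=(c_{H,0},c_{H,1})\in\mathrm{C}_{\widetilde{[D,D]}}$ where $c_{H,0}=(H(\mathbf{x},0))_{\mathbf{x}\in D}$ and $c_{H,1}=(H(\mathbf{x},1))_{\mathbf{x}\in D}$. Then: (i) if $\alpha_{k+1}=0$, then $\mathrm{w}(c_{H,1})=\mathrm{w}(c_{H,0})$ and $\mathrm{w}(c_H)=2\,\mathrm{w}(c_{\widetilde H})$; (ii) if $\alpha_{k+1}\ne 0$, then $\mathrm{w}(c_H)=n+\frac{q-2}{q-1}\mathrm{w}(c_{\widetilde H})$.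
   Context: For a finite ordered set $D=\{P_1,\ldots,P_n\}\subseteq\mathbb{F}_q^k$, $\mathrm{C}_D=\{(f(P_1),\ldots,f(P_n)):f \text{ linear form on }\mathbb{F}_q^k\}$. $\mathrm{w}$ denotes Hamming weight. *)

theory Defs
  imports "HOL-Analysis.Analysis"
begin

definition lform :: "'a::comm_ring_1 ^ 'n \<Rightarrow> 'a ^ 'n \<Rightarrow> 'a" where
  "lform \<alpha> x = (\<Sum>i\<in>UNIV. \<alpha> $ i * x $ i)"

definition lform_ext :: "'a::comm_ring_1 ^ 'n \<Rightarrow> 'a \<Rightarrow> ('a ^ 'n) \<times> 'a \<Rightarrow> 'a" where
  "lform_ext \<alpha> \<beta> p = lform \<alpha> (fst p) + \<beta> * snd p"

definition hweight :: "'b set \<Rightarrow> ('b \<Rightarrow> 'a::zero) \<Rightarrow> nat" where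
  "hweight D c = card {p \<in> D. c p \<noteq> 0}"

definition tildeDD :: "('a::{zero,one} ^ 'n) set \<Rightarrow> (('a ^ 'n) \<times> 'a) set" where
  "tildeDD D = {(x, 1) | x. x \<in> D} \<union> {(x, 0) | x. x \<in> D}"

end

theory Submission
  imports Defs
begin

text \<open>Scaling by \<open>a \<noteq> 0\<close> permutes \<open>D\<close> and multiplies \<open>lform \<alpha>\<close> by \<open>a\<close>, so every nonzero
  value of \<open>lform \<alpha>\<close> is taken on \<open>D\<close> equally often, say \<open>m\<close> times, and its weight is
  \<open>(q - 1) m\<close>. The points \<open>(x, 0)\<close> contribute that weight to \<open>w(c\<^sub>H)\<close>; the points \<open>(x, 1)\<close>
  contribute \<open>n\<close> minus the number of \<open>x\<close> with \<open>lform \<alpha> x = -\<beta>\<close>, which is \<open>n - m\<close> when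
  \<open>\<beta> \<noteq> 0\<close>.\<close>

lemma lform_smult: "lform \<alpha> (c *s x) = c * lform \<alpha> x"
  unfolding lform_def by (simp add: sum_distrib_left algebra_simps)

lemma card_lform_fiber_eq:
  fixes D :: "('a::field ^ 'k) set"
  assumes closed: "\<And>a x. a \<noteq> 0 \<Longrightarrow> x \<in> D \<Longrightarrow> a *s x \<in> D"
    and "c \<noteq> 0" and "d \<noteq> 0"
  shows "card {x\<in>D. lform \<alpha> x = c} = card {x\<in>D. lform \<alpha> x = d}"
proof -
  have "c / d \<noteq> 0" "d / c \<noteq> 0" using assms(2,3) by simp_all
  then have "bij_betw (\<lambda>x. (c / d) *s x) {x\<in>D. lform \<alpha> x = d} {x\<in>D. lform \<alpha> x = c}"
    using assms(2,3)
    by (intro bij_betwI[where g = "\<lambda>x. (d / c) *s x"])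
       (auto simp: closed lform_smult vector_smult_assoc)
  then show ?thesis by (simp add: bij_betw_same_card)
qed

lemma hweight_lform:
  fixes D :: "('a::{finite,field} ^ 'k) set"
  assumes closed: "\<And>a x. a \<noteq> 0 \<Longrightarrow> x \<in> D \<Longrightarrow> a *s x \<in> D" and "c \<noteq> 0"
  shows "hweight D (lform \<alpha>) = (CARD('a) - 1) * card {x\<in>D. lform \<alpha> x = c}"
proof -
  have "{x\<in>D. lform \<alpha> x \<noteq> 0} = (\<Union>d\<in>-{0}. {x\<in>D. lform \<alpha> x = d})" by auto
  then have "hweight D (lform \<alpha>) = (\<Sum>d\<in>-{0}. card {x\<in>D. lform \<alpha> x = d})"
    unfolding hweight_def by (auto intro: card_UN_disjoint)
  also have "\<dots> = (\<Sum>d\<in>-{0::'a}. card {x\<in>D. lform \<alpha> x = c})"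
    using card_lform_fiber_eq[OF closed _ \<open>c \<noteq> 0\<close>] by (intro sum.cong) auto
  also have "\<dots> = (CARD('a) - 1) * card {x\<in>D. lform \<alpha> x = c}"
    by (simp add: Compl_eq_Diff_UNIV card_Diff_subset)
  finally show ?thesis .
qed

lemma hweight_tildeDD:
  assumes "finite D"
  shows "hweight (tildeDD D) (lform_ext \<alpha> \<beta>)
           = hweight D (\<lambda>x. lform_ext \<alpha> \<beta> (x, 1)) + hweight D (\<lambda>x. lform_ext \<alpha> \<beta> (x, 0))"
proof -
  let ?S = "\<lambda>t. {x\<in>D. lform_ext \<alpha> \<beta> (x, t) \<noteq> 0}"
  have nonzero: "{p \<in> tildeDD D. lform_ext \<alpha> \<beta> p \<noteq> 0}
                   = (\<lambda>x. (x, 1)) ` ?S 1 \<union> (\<lambda>x. (x, 0)) ` ?S 0"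
    unfolding tildeDD_def by auto
  show ?thesis
    unfolding hweight_def nonzero using assms
    by (subst card_Un_disjoint) (auto simp: card_image inj_on_def)
qed

lemma hweight_lform_shift:
  assumes "finite D"
  shows "hweight D (\<lambda>x. lform \<alpha> x + \<beta>) = card D - card {x\<in>D. lform \<alpha> x = -\<beta>}"
proof -
  have "{x\<in>D. lform \<alpha> x + \<beta> \<noteq> 0} = D - {x\<in>D. lform \<alpha> x = -\<beta>}"
    by (auto simp: add_eq_0_iff)
  then show ?thesis
    unfolding hweight_def using assms by (simp add: card_Diff_subset)
qed

lemma card_field_ge_2: "CARD('a::{finite,field}) \<ge> 2"
proof -
  have "card {0::'a, 1} \<le> CARD('a)" by (rule card_mono) simp_all
  then show ?thesis by simp
qed

theorem proposition5p1:
  fixes D :: "('a::{finite,field} ^ 'k) set"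
    and \<alpha> :: "'a ^ 'k" and \<beta> :: 'a and n :: nat
  assumes "CARD('k) \<ge> 2"
    and "0 \<notin> D"
    and "\<forall>a::'a. a \<noteq> 0 \<longrightarrow> (\<lambda>x. a *s x) ` D = D"
    and "card D = n"
  shows "(\<beta> = 0 \<longrightarrow>
            hweight D (\<lambda>x. lform_ext \<alpha> \<beta> (x, 1)) = hweight D (\<lambda>x. lform_ext \<alpha> \<beta> (x, 0))
          \<and> hweight (tildeDD D) (lform_ext \<alpha> \<beta>) = 2 * hweight D (lform \<alpha>))
       \<and> (\<beta> \<noteq> 0 \<longrightarrow>
            real (hweight (tildeDD D) (lform_ext \<alpha> \<beta>))
              = real n + (real CARD('a) - 2) / (real CARD('a) - 1) * real (hweight D (lform \<alpha>)))"
proof (intro conjI impI)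
  have closed: "a *s x \<in> D" if "a \<noteq> 0" "x \<in> D" for a x
    using assms(3) that by blast
  have split: "hweight (tildeDD D) (lform_ext \<alpha> \<beta>)
                 = hweight D (\<lambda>x. lform \<alpha> x + \<beta>) + hweight D (lform \<alpha>)"
    using hweight_tildeDD[of D] by (simp add: lform_ext_def)
  {
    assume "\<beta> = 0"
    then show "hweight D (\<lambda>x. lform_ext \<alpha> \<beta> (x, 1)) = hweight D (\<lambda>x. lform_ext \<alpha> \<beta> (x, 0))"
      and "hweight (tildeDD D) (lform_ext \<alpha> \<beta>) = 2 * hweight D (lform \<alpha>)"
      using split by (simp_all add: lform_ext_def)
  next
    assume "\<beta> \<noteq> 0"
    define m where "m = card {x\<in>D. lform \<alpha> x = -\<beta>}"
    have "m \<le> n" unfolding m_def using assms(4) by (auto intro: card_mono)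
    moreover have "hweight D (lform \<alpha>) = (CARD('a) - 1) * m"
      unfolding m_def using hweight_lform[OF closed, of "-\<beta>"] \<open>\<beta> \<noteq> 0\<close> by simp
    moreover have "hweight D (\<lambda>x. lform \<alpha> x + \<beta>) = n - m"
      unfolding m_def using hweight_lform_shift[of D] assms(4) by simp
    ultimately show "real (hweight (tildeDD D) (lform_ext \<alpha> \<beta>))
              = real n + (real CARD('a) - 2) / (real CARD('a) - 1) * real (hweight D (lform \<alpha>))"
      using split card_field_ge_2[where 'a='a] by (simp add: of_nat_diff field_simps)
  }
qed

end
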